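(* Every instance of the axiom schema (K1) $\Box(\alpha\to\beta)\to(\Diamond\alpha\to\Diamond\beta)$ is derivable in ${\bf Tmd}$.
   Context: Formulas are built from a denumerable set of propositional variables by the unary connectives $\neg$, $\Box$ and the binary connective $\to$; $For$ is the set of all formulas; $\Diamond\alpha:=\neg\Box\neg\alpha$. ${\bf Tmd}$ is the Hilbert calculus whose axioms are all instances (over $For$) of the axiom schemas of a standard Hilbert calculus for classical propositional logic in the signature $\{\neg,\to\}$, plus all instances of: (K) $\Box(\alpha\to\beta)\to(\Box\alpha\to\Box\beta)$; (Kdet) $\Box(\alpha\to\beta)\to(\Diamond\alpha\to\Box\beta)$; (K2) $\Diamond(\alpha\to\beta)\to(\Box\alpha\to\Diamond\beta)$; (M1) $\neg\Diamond\alpha\to\Box(\alpha\to\beta)$; (M2) $\Box\beta\to\Box(\alpha\to\beta)$; (M3) $\Diamond\beta\to\Diamond(\alpha\to\beta)$; (M4) $\Diamond\neg\alpha\to\Diamond(\alpha\to\beta)$; (T) $\Box\alpha\to\alpha$; (DN1) $\Box\alpha\to\Box\neg\neg\alpha$; (DN2) $\Box\neg\neg\alpha\to\Box\alpha$; modus ponens is the only inference rule. *)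

theory Defs
  imports Main
begin

datatype fm =
    Var nat
  | Neg fm
  | Box fm
  | Imp fm fm

definition Dia :: "fm \<Rightarrow> fm" where
  "Dia a = Neg (Box (Neg a))"

inductive Axiom :: "fm \<Rightarrow> bool" where
  A1: "Axiom (Imp a (Imp b a))"
| A2: "Axiom (Imp (Imp a (Imp b c)) (Imp (Imp a b) (Imp a c)))"
| A3: "Axiom (Imp (Imp (Neg a) (Neg b)) (Imp b a))"
| K: "Axiom (Imp (Box (Imp a b)) (Imp (Box a) (Box b)))"
| Kdet: "Axiom (Imp (Box (Imp a b)) (Imp (Dia a) (Box b)))"
| K2: "Axiom (Imp (Dia (Imp a b)) (Imp (Box a) (Dia b)))"
| M1: "Axiom (Imp (Neg (Dia a)) (Box (Imp a b)))"
| M2: "Axiom (Imp (Box b) (Box (Imp a b)))"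
| M3: "Axiom (Imp (Dia b) (Dia (Imp a b)))"
| M4: "Axiom (Imp (Dia (Neg a)) (Dia (Imp a b)))"
| T: "Axiom (Imp (Box a) a)"
| DN1: "Axiom (Imp (Box a) (Box (Neg (Neg a))))"
| DN2: "Axiom (Imp (Box (Neg (Neg a))) (Box a))"

inductive Tmd :: "fm \<Rightarrow> bool" where
  ax: "Axiom a \<Longrightarrow> Tmd a"
| mp: "Tmd a \<Longrightarrow> Tmd (Imp a b) \<Longrightarrow> Tmd b"

end

theory Submission
  imports Defs
begin

(* Kdet turns \<Box>(\<alpha> \<rightarrow> \<beta>) into \<Diamond>\<alpha> \<rightarrow> \<Box>\<beta>, and \<Box>\<beta> \<rightarrow> \<Diamond>\<beta> holds because T gives
   both \<Box>\<beta> \<rightarrow> \<beta> and, applied to \<not>\<beta> and contraposed, \<beta> \<rightarrow> \<Diamond>\<beta>. *)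

lemma Tmd_A1: "Tmd (Imp a (Imp b a))"
  by (intro Tmd.ax Axiom.A1)

lemma Tmd_A2: "Tmd (Imp (Imp a (Imp b c)) (Imp (Imp a b) (Imp a c)))"
  by (intro Tmd.ax Axiom.A2)

lemma Tmd_A3: "Tmd (Imp (Imp (Neg a) (Neg b)) (Imp b a))"
  by (intro Tmd.ax Axiom.A3)

lemma Tmd_T: "Tmd (Imp (Box a) a)"
  by (intro Tmd.ax Axiom.T)

lemma Tmd_Kdet: "Tmd (Imp (Box (Imp a b)) (Imp (Dia a) (Box b)))"
  by (intro Tmd.ax Axiom.Kdet)

lemma Tmd_imp_self: "Tmd (Imp a a)"
  by (rule Tmd.mp[OF Tmd_A1 Tmd.mp[OF Tmd_A1 Tmd_A2[of a "Imp a a" a]]])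

lemma Tmd_imp_prefix: "Tmd (Imp b c) \<Longrightarrow> Tmd (Imp (Imp a b) (Imp a c))"
  by (rule Tmd.mp[OF Tmd.mp[OF _ Tmd_A1] Tmd_A2])

lemma Tmd_imp_trans: "Tmd (Imp a b) \<Longrightarrow> Tmd (Imp b c) \<Longrightarrow> Tmd (Imp a c)"
  by (rule Tmd.mp[OF _ Tmd_imp_prefix])

lemma Tmd_contrapos: "Tmd (Imp (Neg a) (Neg b)) \<Longrightarrow> Tmd (Imp b a)"
  by (rule Tmd.mp[OF _ Tmd_A3])

lemma Tmd_Neg_Neg_elim: "Tmd (Imp (Neg (Neg a)) a)"
proof -
  have "Tmd (Imp (Neg (Neg a)) (Imp (Neg (Neg (Neg (Neg a)))) (Neg (Neg a))))"
    by (rule Tmd_A1)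
  then have "Tmd (Imp (Neg (Neg a)) (Imp (Neg a) (Neg (Neg (Neg a)))))"
    by (rule Tmd_imp_trans[OF _ Tmd_A3])
  then have "Tmd (Imp (Neg (Neg a)) (Imp (Neg (Neg a)) a))"
    by (rule Tmd_imp_trans[OF _ Tmd_A3])
  then have "Tmd (Imp (Imp (Neg (Neg a)) (Neg (Neg a))) (Imp (Neg (Neg a)) a))"
    by (rule Tmd.mp[OF _ Tmd_A2])
  then show ?thesis
    by (rule Tmd.mp[OF Tmd_imp_self])
qed

lemma Tmd_imp_Dia: "Tmd (Imp a (Dia a))"
  unfolding Dia_def
  by (rule Tmd_contrapos[OF Tmd_imp_trans[OF Tmd_Neg_Neg_elim Tmd_T]])

lemma Tmd_Box_imp_Dia: "Tmd (Imp (Box a) (Dia a))"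
  by (rule Tmd_imp_trans[OF Tmd_T Tmd_imp_Dia])

theorem mainTheorem12:
  shows "\<forall>a b. Tmd (Imp (Box (Imp a b)) (Imp (Dia a) (Dia b)))"
proof (intro allI)
  fix a b
  have "Tmd (Imp (Imp (Dia a) (Box b)) (Imp (Dia a) (Dia b)))"
    by (rule Tmd_imp_prefix[OF Tmd_Box_imp_Dia])
  then show "Tmd (Imp (Box (Imp a b)) (Imp (Dia a) (Dia b)))"
    by (rule Tmd_imp_trans[OF Tmd_Kdet])
qed

end
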